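(* Let $\mathcal{X}$ be a finite set of $n$ items and let $\mathcal{S}$ be a collection of distinct subsets of $\mathcal{X}$, each of size at least $2$. Let $G(\mathcal{S})$ be the integer matrix with one row $g_{x,C}^{T}$ for each $C\in\mathcal{S}$ and each $x\in C$. Then the full-rank CDM is identifiable up to a shift from the choice probabilities on $\mathcal{S}$ — i.e. whenever $u,u'\in\mathbb{R}^{n(n-1)}$ satisfy $P_u(x\mid C)=P_{u'}(x\mid C)$ for all $C\in\mathcal{S}$, $x\in C$, we have $u'-u=\alpha\mathbf{1}$ for some $\alpha\in\mathbb{R}$ — if and only if $\mathrm{rank}(G(\mathcal{S}))=n(n-1)-1$.
   Context: A (full-rank) CDM on $\mathcal{X}$ has parameter vector $u=(u_{xz})_{x\neq z}\in\mathbb{R}^{n(n-1)}$ and choice probabilities, for $C\subseteq\mathcal{X}$, $|C|\ge2$, $x\in C$, $P_u(x\mid C)=\dfrac{\exp\big(\sum_{z\in C\setminus\{x\}}u_{xz}\big)}{\sum_{y\in C}\exp\big(\sum_{z\in C\setminus\{y\}}u_{yz}\big)}$. For a set $C$ and $x\in C$, $g_{x,C}\in\mathbb{Z}^{n(n-1)}$ is the integer vector with $g_{x,C}^{T}u=\sum_{y\in C\setminus\{x\}}\Big([u_{xy}-u_{yx}]+\sum_{z\in C\setminus\{x,y\}}[u_{xz}-u_{yz}]\Big)$ for all $u$. $\mathbf{1}$ denotes the all-ones vector. *)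

theory Defs
  imports "HOL-Analysis.Analysis"
begin

text \<open>Items form a finite type 'a (X = UNIV, n = CARD('a)).  A CDM parameter is
  u :: "'a \<times> 'a \<Rightarrow> real"; only the off-diagonal entries u(x,z), x \<noteq> z, are used.\<close>

definition cdm_prob :: "('a \<times> 'a \<Rightarrow> real) \<Rightarrow> 'a set \<Rightarrow> 'a \<Rightarrow> real" where
  "cdm_prob u C x =
     exp (\<Sum>z\<in>C - {x}. u (x, z)) / (\<Sum>y\<in>C. exp (\<Sum>z\<in>C - {y}. u (y, z)))"

definition g_form :: "'a set \<Rightarrow> 'a \<Rightarrow> ('a \<times> 'a \<Rightarrow> real) \<Rightarrow> real" where
  "g_form C x u =
     (\<Sum>y\<in>C - {x}. (u (x, y) - u (y, x)) + (\<Sum>z\<in>C - {x, y}. (u (x, z) - u (y, z))))"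

text \<open>The coefficient vector g_{x,C}, indexed by pairs; diagonal coordinates
  (which are not parameters) are set to 0, so they do not affect the rank.\<close>
definition g_vec :: "'a set \<Rightarrow> 'a \<Rightarrow> real ^ ('a::finite \<times> 'a)" where
  "g_vec C x = (\<chi> p. if fst p \<noteq> snd p then g_form C x (\<lambda>q. if q = p then 1 else 0) else 0)"

definition rank_G :: "'a::finite set set \<Rightarrow> nat" where
  "rank_G S = dim (span {g_vec C x | C x. C \<in> S \<and> x \<in> C})"

end

theory Submission
  imports Defs
begin

text \<open>Write s_u(C, x) for the utility of x in C, the sum of u(x, z) over z in C - {x}.
  Then P_u(- | C) is the softmax of s_u(C, -), so P_u and P_u' agree on C iff
  s_{u'-u}(C, -) is constant on C.  Moreover g_{x,C}^T u is the sum of s_u(C, x) - s_u(C, y)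
  over y in C - {x}, i.e. |C| s_u(C, x) minus the total utility, which vanishes for all x in C
  iff s_u(C, -) is constant on C.  Hence identifiability up to a shift says that the kernel
  of G(S) in the n(n-1)-dimensional parameter space is spanned by the all-ones vector, which
  always lies in it; by rank-nullity this kernel has dimension n(n-1) - rank G(S).\<close>

definition utility :: "('a \<times> 'a \<Rightarrow> real) \<Rightarrow> 'a set \<Rightarrow> 'a \<Rightarrow> real" where
  "utility u C x = (\<Sum>z\<in>C - {x}. u (x, z))"

lemma cdm_prob_utility:
  "cdm_prob u C x = exp (utility u C x) / (\<Sum>y\<in>C. exp (utility u C y))"
  by (simp add: cdm_prob_def utility_def)

lemma utility_diff: "utility (\<lambda>q. u' q - u q) C x = utility u' C x - utility u C x"
  by (simp add: utility_def sum_subtractf)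

lemma softmax_eq_iff_shift:
  fixes s t :: "'a \<Rightarrow> real"
  assumes "finite C"
  shows "(\<forall>x\<in>C. exp (s x) / (\<Sum>y\<in>C. exp (s y)) = exp (t x) / (\<Sum>y\<in>C. exp (t y)))
         \<longleftrightarrow> (\<exists>c. \<forall>x\<in>C. t x - s x = c)"
proof (cases "C = {}")
  case False
  define Z where "Z = (\<Sum>y\<in>C. exp (s y))"
  define Z' where "Z' = (\<Sum>y\<in>C. exp (t y))"
  have "Z > 0" "Z' > 0"
    unfolding Z_def Z'_def using assms False by (auto intro!: sum_pos)
  show ?thesis unfolding Z_def[symmetric] Z'_def[symmetric]
  proof
    assume eq: "\<forall>x\<in>C. exp (s x) / Z = exp (t x) / Z'"
    have "t x - s x = ln (Z' / Z)" if "x \<in> C" for x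
    proof -
      have "exp (t x - s x) = Z' / Z"
        using eq that \<open>Z > 0\<close> \<open>Z' > 0\<close> by (simp add: exp_diff field_simps)
      then show ?thesis by (metis ln_exp)
    qed
    then show "\<exists>c. \<forall>x\<in>C. t x - s x = c" by blast
  next
    assume "\<exists>c. \<forall>x\<in>C. t x - s x = c"
    then obtain c where c: "\<And>x. x \<in> C \<Longrightarrow> t x = s x + c"
      by (metis add.commute diff_eq_eq)
    have "Z' = exp c * Z"
      unfolding Z'_def Z_def by (simp add: c exp_add sum_distrib_left mult.commute)
    then show "\<forall>x\<in>C. exp (s x) / Z = exp (t x) / Z'"
      using \<open>Z > 0\<close> by (simp add: c exp_add)
  qed
qed simp

lemma sum_diffs_eq_zero_iff_constant:
  fixes t :: "'a \<Rightarrow> real"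
  assumes "finite C"
  shows "(\<forall>x\<in>C. (\<Sum>y\<in>C - {x}. t x - t y) = 0) \<longleftrightarrow> (\<exists>c. \<forall>x\<in>C. t x = c)"
proof
  assume zero: "\<forall>x\<in>C. (\<Sum>y\<in>C - {x}. t x - t y) = 0"
  have "t x = sum t C / card C" if "x \<in> C" for x
  proof -
    have "(\<Sum>y\<in>C - {x}. t x - t y) = (\<Sum>y\<in>C. t x - t y)"
      using assms that by (simp add: sum.remove)
    also have "\<dots> = card C * t x - sum t C"
      by (simp add: sum_subtractf)
    finally have "card C * t x = sum t C" using zero that by simp
    moreover have "card C > 0" using assms that card_gt_0_iff by blast
    ultimately show ?thesis by (simp add: field_simps)
  qed
  then show "\<exists>c. \<forall>x\<in>C. t x = c" by blast
qed auto

lemma g_form_utility: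
  assumes "finite C" "x \<in> C"
  shows "g_form C x u = (\<Sum>y\<in>C - {x}. utility u C x - utility u C y)"
  unfolding g_form_def
proof (intro sum.cong refl)
  fix y assume y: "y \<in> C - {x}"
  have "C - {x} = insert y (C - {x, y})" "C - {y} = insert x (C - {x, y})"
    using y assms by auto
  then have "utility u C x = u (x, y) + (\<Sum>z\<in>C - {x, y}. u (x, z))"
    and "utility u C y = u (y, x) + (\<Sum>z\<in>C - {x, y}. u (y, z))"
    unfolding utility_def using assms by (metis finite_Diff Diff_iff insertCI sum.insert)+
  then show "u (x, y) - u (y, x) + (\<Sum>z\<in>C - {x, y}. u (x, z) - u (y, z)) =
      utility u C x - utility u C y"
    by (simp add: sum_subtractf)
qed

lemma cdm_prob_eq_iff_g_form:
  assumes "finite C"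
  shows "(\<forall>x\<in>C. cdm_prob u C x = cdm_prob u' C x) \<longleftrightarrow>
         (\<forall>x\<in>C. g_form C x (\<lambda>q. u' q - u q) = 0)"
proof -
  have "(\<forall>x\<in>C. cdm_prob u C x = cdm_prob u' C x) \<longleftrightarrow>
        (\<exists>c. \<forall>x\<in>C. utility (\<lambda>q. u' q - u q) C x = c)"
    unfolding cdm_prob_utility utility_diff by (rule softmax_eq_iff_shift[OF assms])
  also have "\<dots> \<longleftrightarrow> (\<forall>x\<in>C. g_form C x (\<lambda>q. u' q - u q) = 0)"
    using sum_diffs_eq_zero_iff_constant[OF assms] assms by (simp add: g_form_utility)
  finally show ?thesis .
qed

text \<open>The parameter space R^{n(n-1)}, realised as the vectors indexed by pairs that vanish
  on the diagonal.\<close>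

definition offdiag_space :: "(real ^ ('a::finite \<times> 'a)) set" where
  "offdiag_space = {y. \<forall>p. fst p = snd p \<longrightarrow> y $ p = 0}"

definition offdiag_vec :: "('a \<times> 'a \<Rightarrow> real) \<Rightarrow> real ^ ('a::finite \<times> 'a)" where
  "offdiag_vec u = (\<chi> p. if fst p \<noteq> snd p then u p else 0)"

lemma offdiag_vec_nth: "offdiag_vec u $ p = (if fst p \<noteq> snd p then u p else 0)"
  by (simp add: offdiag_vec_def)

lemma offdiag_vec_in_offdiag_space: "offdiag_vec u \<in> offdiag_space"
  by (simp add: offdiag_space_def offdiag_vec_nth)

lemma offdiag_vec_vec_nth: "y \<in> offdiag_space \<Longrightarrow> offdiag_vec (\<lambda>q. y $ q) = y"
  by (auto simp: offdiag_space_def offdiag_vec_nth vec_eq_iff)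

lemma subspace_offdiag_space: "subspace offdiag_space"
  by (simp add: subspace_def offdiag_space_def)

lemma card_offdiag_pairs: "card {p :: 'a::finite \<times> 'a. fst p \<noteq> snd p} = CARD('a) * (CARD('a) - 1)"
proof -
  have "{p :: 'a \<times> 'a. fst p \<noteq> snd p} = (SIGMA a:UNIV. UNIV - {a})" by auto
  then show ?thesis by simp
qed

lemma dim_offdiag_space:
  "dim (offdiag_space :: (real ^ ('a::finite \<times> 'a)) set) = CARD('a) * (CARD('a) - 1)"
proof -
  have "offdiag_space = {y :: real ^ ('a \<times> 'a). \<forall>p. p \<notin> {p. fst p \<noteq> snd p} \<longrightarrow> y $ p = 0}"
    by (simp add: offdiag_space_def)
  then have "dim (offdiag_space :: (real ^ ('a \<times> 'a)) set) = card {p :: 'a \<times> 'a. fst p \<noteq> snd p}"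
    using dim_substandard_cart[where 'a = real, of "{p :: 'a \<times> 'a. fst p \<noteq> snd p}"] by (simp add: dim_vec_eq)
  then show ?thesis by (simp add: card_offdiag_pairs)
qed

lemma g_form_offdiag_vec: "g_form C x (\<lambda>q. offdiag_vec u $ q) = g_form C x u"
  unfolding g_form_def
  by (intro sum.cong refl arg_cong2[where f = "(+)"] arg_cong2[where f = "(-)"])
    (auto simp: offdiag_vec_nth)

lemma linear_g_form: "linear (\<lambda>y :: real ^ ('a::finite \<times> 'a). g_form C x (\<lambda>q. y $ q))"
  unfolding g_form_def
  by (intro linear_compose_sum linear_compose_add linear_compose_sub ballI
      bounded_linear.linear[OF bounded_linear_vec_nth])

lemma inner_g_vec_offdiag_vec: "g_vec C x \<bullet> offdiag_vec u = g_form C x u"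
proof -
  let ?f = "\<lambda>y :: real ^ ('a \<times> 'a). g_form C x (\<lambda>q. y $ q)"
  have "g_vec C x \<bullet> offdiag_vec u = (\<Sum>p\<in>UNIV. offdiag_vec u $ p * ?f (axis p 1))"
    unfolding inner_vec_def g_vec_def offdiag_vec_nth
    by (intro sum.cong) (simp_all add: axis_def)
  also have "\<dots> = ?f (\<Sum>p\<in>UNIV. offdiag_vec u $ p *\<^sub>R axis p 1)"
    unfolding linear_sum[OF linear_g_form] linear_scale[OF linear_g_form] o_def by simp
  also have "\<dots> = g_form C x u"
    unfolding basis_expansion[where 'a = real, unfolded scalar_mult_eq_scaleR] by (rule g_form_offdiag_vec)
  finally show ?thesis .
qed

lemma offdiag_vec_in_span_ones_iff:
  "offdiag_vec v \<in> span {offdiag_vec (\<lambda>_. 1)} \<longleftrightarrow> (\<exists>\<alpha>. \<forall>x z. x \<noteq> z \<longrightarrow> v (x, z) = \<alpha>)"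
proof
  assume "offdiag_vec v \<in> span {offdiag_vec (\<lambda>_. 1)}"
  then obtain k where k: "offdiag_vec v = k *\<^sub>R offdiag_vec (\<lambda>_. 1)"
    unfolding span_singleton by blast
  have "v (x, z) = k" if "x \<noteq> z" for x z
  proof -
    have "offdiag_vec v $ (x, z) = (k *\<^sub>R offdiag_vec (\<lambda>_. 1)) $ (x, z)"
      by (simp only: k)
    then show ?thesis
      using that by (simp add: offdiag_vec_nth)
  qed
  then show "\<exists>\<alpha>. \<forall>x z. x \<noteq> z \<longrightarrow> v (x, z) = \<alpha>" by blast
next
  assume "\<exists>\<alpha>. \<forall>x z. x \<noteq> z \<longrightarrow> v (x, z) = \<alpha>"
  then obtain \<alpha> where "\<forall>x z. x \<noteq> z \<longrightarrow> v (x, z) = \<alpha>" ..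
  then have "offdiag_vec v = \<alpha> *\<^sub>R offdiag_vec (\<lambda>_. 1)"
    by (auto simp: vec_eq_iff offdiag_vec_nth)
  then show "offdiag_vec v \<in> span {offdiag_vec (\<lambda>_. 1)}"
    by (simp add: span_base span_scale)
qed

lemma offdiag_ones_nonzero:
  assumes "CARD('a::finite) \<ge> 2"
  shows "offdiag_vec (\<lambda>_. 1) \<noteq> (0 :: real ^ ('a \<times> 'a))"
proof -
  obtain a b :: 'a where "a \<noteq> b"
    using assms card_le_Suc0_iff_eq[of "UNIV :: 'a set"] by fastforce
  then have "offdiag_vec (\<lambda>_. 1) $ (a, b) \<noteq> (0 :: real)"
    by (simp add: offdiag_vec_nth)
  then show ?thesis by auto
qed

definition G_kernel :: "'a::finite set set \<Rightarrow> (real ^ ('a \<times> 'a)) set" where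
  "G_kernel S = {y \<in> offdiag_space. \<forall>C\<in>S. \<forall>x\<in>C. g_vec C x \<bullet> y = 0}"

lemma offdiag_vec_in_G_kernel_iff:
  "offdiag_vec u \<in> G_kernel S \<longleftrightarrow> (\<forall>C\<in>S. \<forall>x\<in>C. g_form C x u = 0)"
  by (simp add: G_kernel_def offdiag_vec_in_offdiag_space inner_g_vec_offdiag_vec)

lemma subspace_G_kernel: "subspace (G_kernel S)"
  by (auto simp: subspace_def G_kernel_def offdiag_space_def inner_add_right)

lemma offdiag_ones_in_G_kernel: "offdiag_vec (\<lambda>_. 1) \<in> G_kernel S"
  by (simp add: offdiag_vec_in_G_kernel_iff g_form_def)

lemma cdm_identifiable_iff_G_kernel_subset:
  "(\<forall>u u' :: 'a::finite \<times> 'a \<Rightarrow> real.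
      (\<forall>C\<in>S. \<forall>x\<in>C. cdm_prob u C x = cdm_prob u' C x) \<longrightarrow>
      (\<exists>\<alpha>::real. \<forall>x z. x \<noteq> z \<longrightarrow> u' (x, z) - u (x, z) = \<alpha>))
   \<longleftrightarrow> G_kernel S \<subseteq> span {offdiag_vec (\<lambda>_. 1)}"
proof -
  have same_prob_iff: "(\<forall>C\<in>S. \<forall>x\<in>C. cdm_prob u C x = cdm_prob u' C x) \<longleftrightarrow>
      offdiag_vec (\<lambda>q. u' q - u q) \<in> G_kernel S" for u u' :: "'a \<times> 'a \<Rightarrow> real"
    by (simp add: offdiag_vec_in_G_kernel_iff cdm_prob_eq_iff_g_form)
  show ?thesis
  proof
    assume identifiable: "\<forall>u u' :: 'a \<times> 'a \<Rightarrow> real.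
      (\<forall>C\<in>S. \<forall>x\<in>C. cdm_prob u C x = cdm_prob u' C x) \<longrightarrow>
      (\<exists>\<alpha>::real. \<forall>x z. x \<noteq> z \<longrightarrow> u' (x, z) - u (x, z) = \<alpha>)"
    show "G_kernel S \<subseteq> span {offdiag_vec (\<lambda>_. 1)}"
    proof
      fix y assume "y \<in> G_kernel S"
      then have y: "offdiag_vec (\<lambda>q. y $ q - 0) = y"
        using offdiag_vec_vec_nth[of y] by (simp add: G_kernel_def)
      then have "\<forall>C\<in>S. \<forall>x\<in>C. cdm_prob (\<lambda>_. 0) C x = cdm_prob (\<lambda>q. y $ q) C x"
        using same_prob_iff[of "\<lambda>_. 0" "\<lambda>q. y $ q"] \<open>y \<in> G_kernel S\<close> by simp
      then have "\<exists>\<alpha>. \<forall>x z. x \<noteq> z \<longrightarrow> y $ (x, z) - 0 = \<alpha>"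
        using identifiable[rule_format, of "\<lambda>_. 0" "\<lambda>q. y $ q"] by simp
      then have "offdiag_vec (\<lambda>q. y $ q - 0) \<in> span {offdiag_vec (\<lambda>_. 1)}"
        unfolding offdiag_vec_in_span_ones_iff .
      then show "y \<in> span {offdiag_vec (\<lambda>_. 1)}"
        unfolding y .
    qed
  next
    assume kernel_subset: "G_kernel S \<subseteq> span {offdiag_vec (\<lambda>_. 1)}"
    show "\<forall>u u' :: 'a \<times> 'a \<Rightarrow> real.
      (\<forall>C\<in>S. \<forall>x\<in>C. cdm_prob u C x = cdm_prob u' C x) \<longrightarrow>
      (\<exists>\<alpha>::real. \<forall>x z. x \<noteq> z \<longrightarrow> u' (x, z) - u (x, z) = \<alpha>)"
    proof (intro allI impI)
      fix u u' :: "'a \<times> 'a \<Rightarrow> real"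
      assume "\<forall>C\<in>S. \<forall>x\<in>C. cdm_prob u C x = cdm_prob u' C x"
      then have "offdiag_vec (\<lambda>q. u' q - u q) \<in> span {offdiag_vec (\<lambda>_. 1)}"
        using same_prob_iff kernel_subset by blast
      then show "\<exists>\<alpha>. \<forall>x z. x \<noteq> z \<longrightarrow> u' (x, z) - u (x, z) = \<alpha>"
        unfolding offdiag_vec_in_span_ones_iff .
    qed
  qed
qed

lemma dim_orthogonal_to_span:
  fixes R :: "'a::euclidean_space set"
  assumes "subspace B" "R \<subseteq> B"
  shows "dim {y \<in> B. \<forall>r\<in>R. orthogonal r y} + dim (span R) = dim B"
proof -
  have "{y \<in> B. \<forall>r\<in>R. orthogonal r y} = {y \<in> B. \<forall>r\<in>span R. orthogonal r y}"
    by (meson orthogonal_commute orthogonal_to_span span_base)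
  moreover have "span R \<subseteq> B"
    using assms by (simp add: span_minimal)
  ultimately show ?thesis
    using dim_subspace_orthogonal_to_vectors[OF subspace_span assms(1)] by simp
qed

lemma dim_G_kernel:
  "dim (G_kernel (S :: 'a::finite set set)) + rank_G S = CARD('a) * (CARD('a) - 1)"
proof -
  let ?R = "{g_vec C x | C x. C \<in> S \<and> x \<in> C}"
  have "G_kernel S = {y \<in> offdiag_space. \<forall>r\<in>?R. orthogonal r y}"
    by (auto simp: G_kernel_def orthogonal_def)
  moreover have "dim {y \<in> offdiag_space. \<forall>r\<in>?R. orthogonal r y} + dim (span ?R) =
      dim (offdiag_space :: (real ^ ('a \<times> 'a)) set)"
    by (rule dim_orthogonal_to_span[OF subspace_offdiag_space])
      (auto simp: offdiag_space_def g_vec_def)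
  ultimately show ?thesis
    unfolding rank_G_def dim_offdiag_space by simp
qed

lemma dim_eq_1_iff_subset_span_singleton:
  fixes K :: "'a::euclidean_space set"
  assumes "subspace K" "v \<in> K" "v \<noteq> 0"
  shows "dim K = 1 \<longleftrightarrow> K \<subseteq> span {v}"
proof
  have "span {v} \<subseteq> K" using assms by (simp add: span_minimal)
  moreover assume "dim K = 1"
  ultimately have "span {v} = K"
    using assms subspace_dim_equal[OF subspace_span assms(1)] by simp
  then show "K \<subseteq> span {v}" by simp
next
  assume "K \<subseteq> span {v}"
  then have "K = span {v}" using assms by (simp add: span_minimal subset_antisym)
  then show "dim K = 1" using assms by simp
qed

theorem lemma2:
  fixes S :: "'a::finite set set"
  assumes n2: "CARD('a) \<ge> 2"
    and sizes: "\<forall>C\<in>S. card C \<ge> 2"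
  shows "(\<forall>u u' :: 'a \<times> 'a \<Rightarrow> real.
            (\<forall>C\<in>S. \<forall>x\<in>C. cdm_prob u C x = cdm_prob u' C x) \<longrightarrow>
            (\<exists>\<alpha>::real. \<forall>x z. x \<noteq> z \<longrightarrow> u' (x, z) - u (x, z) = \<alpha>))
         \<longleftrightarrow> int (rank_G S) = int (CARD('a) * (CARD('a) - 1)) - 1"
proof -
  have "dim (G_kernel S) = 1 \<longleftrightarrow> G_kernel S \<subseteq> span {offdiag_vec (\<lambda>_. 1)}"
    by (rule dim_eq_1_iff_subset_span_singleton[OF subspace_G_kernel offdiag_ones_in_G_kernel
        offdiag_ones_nonzero[OF n2]])
  moreover have "dim (G_kernel S) = 1 \<longleftrightarrow> int (rank_G S) = int (CARD('a) * (CARD('a) - 1)) - 1"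
    using dim_G_kernel[of S] by linarith
  ultimately show ?thesis
    using cdm_identifiable_iff_G_kernel_subset[of S] by blast
qed

end
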